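(* Let $E\subset\mathbb C$ be the unit disc and let $S\subset E\times E$ be a relatively closed set such that $\operatorname{int}S=\varnothing$ and for every domain $U\subset E\times E$ the set $U\setminus S$ is connected. Let $A$ be the set of all $a\in E$ with $\operatorname{int}_{\mathbb C}S_{(a,\cdot)}=\varnothing$, and $B$ the set of all $b\in E$ with $\operatorname{int}_{\mathbb C}S_{(\cdot,b)}=\varnothing$. Then $A$ and $B$ are not thin at any point of $E$; in particular they are dense in $E$, locally regular, and $h^*_{A,E}\equiv h^*_{B,E}\equiv0$ on $E$.
   Context: Fibers: $S_{(a,\cdot)}:=\{w:(a,w)\in S\}$, $S_{(\cdot,b)}:=\{z:(z,b)\in S\}$. A set $A\subset\mathbb C$ is thin at $a\in\mathbb C$ if either $a\notin\overline{A\setminus\{a\}}$ or there is a function $u$ subharmonic near $a$ with $\limsup_{A\setminus\{a\}\ni z\to a}u(z)<u(a)$. For open $\Omega$ and $A\subset\Omega$, $h_{A,\Omega}:=\sup\{u\ \text{subharmonic on }\Omega: u\le1 \text{ on }\Omega,\ u\le0\text{ on }A\}$ and $h^*$ is its upper semicontinuous regularization; $A$ is locally regular if $h^*_{A\cap\Omega,\Omega}(a)=0$ for all $a\in A$ and all open neighborhoods $\Omega$ of $a$. *)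

theory Defs
  imports "HOL-Analysis.Analysis" "HOL-Library.Extended_Real"
begin

text \<open>Subharmonic functions on an open set, with values in [-infinity, +infinity).
  Upper semicontinuity plus the local sub-mean-value inequality. The circle mean of
  the (upper semicontinuous, possibly -infinity valued) function u is expressed via
  continuous real majorants phi of u on the circle: the mean of u over the circle is the
  infimum of the means of such phi.\<close>

definition circle_mean :: "(complex \<Rightarrow> real) \<Rightarrow> complex \<Rightarrow> real \<Rightarrow> real" where
  "circle_mean \<phi> a r = integral {0..2*pi} (\<lambda>t. \<phi> (a + complex_of_real r * cis t)) / (2*pi)"

definition subharmonic_on :: "complex set \<Rightarrow> (complex \<Rightarrow> ereal) \<Rightarrow> bool" where
  "subharmonic_on \<Omega> u \<longleftrightarrow>
     open \<Omega> \<and>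
     (\<forall>z\<in>\<Omega>. u z < \<infinity>) \<and>
     (\<forall>z\<in>\<Omega>. Limsup (at z) u \<le> u z) \<and>
     (\<forall>a\<in>\<Omega>. \<exists>r0>0. \<forall>r. 0 < r \<and> r < r0 \<longrightarrow> cball a r \<subseteq> \<Omega> \<and>
        (\<forall>\<phi>. continuous_on (sphere a r) \<phi> \<and> (\<forall>z\<in>sphere a r. u z \<le> ereal (\<phi> z))
              \<longrightarrow> u a \<le> ereal (circle_mean \<phi> a r)))"

definition thin_at :: "complex set \<Rightarrow> complex \<Rightarrow> bool" where
  "thin_at A a \<longleftrightarrow>
     a \<notin> closure (A - {a}) \<or>
     (\<exists>\<Omega> u. open \<Omega> \<and> a \<in> \<Omega> \<and> subharmonic_on \<Omega> u \<and>
            Limsup (at a within (A - {a})) u < u a)"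

definition rel_extremal :: "complex set \<Rightarrow> complex set \<Rightarrow> complex \<Rightarrow> ereal" where
  "rel_extremal A \<Omega> z = Sup {u z | u. subharmonic_on \<Omega> u \<and> (\<forall>w\<in>\<Omega>. u w \<le> 1) \<and> (\<forall>w\<in>A. u w \<le> 0)}"

definition usc_reg :: "complex set \<Rightarrow> (complex \<Rightarrow> ereal) \<Rightarrow> complex \<Rightarrow> ereal" where
  "usc_reg \<Omega> f z = max (f z) (Limsup (at z within \<Omega>) f)"

definition rel_extremal_star :: "complex set \<Rightarrow> complex set \<Rightarrow> complex \<Rightarrow> ereal" where
  "rel_extremal_star A \<Omega> = usc_reg \<Omega> (rel_extremal A \<Omega>)"

definition locally_regular :: "complex set \<Rightarrow> bool" where
  "locally_regular A \<longleftrightarrow>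
     (\<forall>a\<in>A. \<forall>\<Omega>. open \<Omega> \<and> a \<in> \<Omega> \<longrightarrow> rel_extremal_star (A \<inter> \<Omega>) \<Omega> a = 0)"

end

theory Submission
  imports Defs "HOL-Complex_Analysis.Contour_Integration"
begin

(* The set A is E minus the union of the countably many sets F_D = {a in E. D is contained in
   the fibre S_(a,.)}, where D runs through the nonempty members of a countable base. Each F_D is
   relatively closed and nowhere dense, and removing it does not disconnect any domain V in E,
   since (V x D) - S is connected and projects densely into V. Hence F_D contains no
   nondegenerate continuum: after an affine change of variables, a continuum joining 0 and 1
   would cut a strip domain into two pieces.
   If u is subharmonic near z0 with u(z0) > c, the maximum principle yields a continuum through
   z0 inside the superlevel set {u >= c} that reaches a small circle around z0. Were it contained
   in the union of the F_D and {z0}, Baire's theorem would put a nondegenerate subcontinuum into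
   a single F_D. So every such superlevel set meets A near z0 and away from z0, which is
   non-thinness of A at z0; the vanishing of the relative extremal function and local regularity
   follow at once. B is handled by swapping the coordinates. *)

section \<open>A continuum joining two points cuts a strip\<close>

lemma cis_3pi_half: "cis (3*pi/2) = -\<i>"
proof -
  have "3*pi/2 = 3/2*pi" by simp
  then show ?thesis by (simp only: cis.code cos_3over2_pi sin_3over2_pi) (simp add: complex_eq_iff)
qed

lemma dist_half_eq_abs_Im: "Re w = 1/2 \<Longrightarrow> dist (1/2::complex) w = \<bar>Im w\<bar>"
proof -
  assume "Re w = 1/2"
  then have "Re (1/2 - w) = 0" by simp
  then show ?thesis by (simp only: dist_norm cmod_def) simp
qed

definition strip_window :: "complex set" where
  "strip_window = {w. 1/3 < Re w \<and> Re w < 2/3} \<inter> ball (1/2) 3"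

abbreviation window_top :: complex where "window_top \<equiv> Complex (1/2) 3"
abbreviation window_bottom :: complex where "window_bottom \<equiv> Complex (1/2) (-3)"
abbreviation left_half_circle :: "real \<Rightarrow> complex"
  where "left_half_circle \<equiv> part_circlepath (1/2) 3 (pi/2) (3*pi/2)"
abbreviation right_half_circle :: "real \<Rightarrow> complex"
  where "right_half_circle \<equiv> part_circlepath (1/2) 3 (pi/2) (-pi/2)"

lemma open_strip_window: "open strip_window"
  unfolding strip_window_def
    by (intro open_Int open_ball open_Collect_conj open_Collect_less continuous_intros)

lemma connected_strip_window: "connected strip_window"
proof -
  have "strip_window = {w. Re w > 1/3} \<inter> {w. Re w < 2/3} \<inter> ball (1/2) 3"
    by (auto simp: strip_window_def)
  also have "convex \<dots>"
    by (intro convex_Int convex_halfspace_Re_gt convex_halfspace_Re_lt convex_ball)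
  finally show ?thesis by (rule convex_connected)
qed

lemma strip_window_subset_ball: "strip_window \<subseteq> ball (1/2) 3"
  by (simp add: strip_window_def)

lemma half_circle_ends:
  "pathstart left_half_circle = window_top" "pathfinish left_half_circle = window_bottom"
  "pathstart right_half_circle = window_top" "pathfinish right_half_circle = window_bottom"
proof -
  have cisi: "cis (pi/2) = \<i>" "cis (-pi/2) = -\<i>" by (simp_all add: complex_eq_iff)
  have exi: "exp (\<i> * complex_of_real x) = cis x" for x by (simp add: cis_conv_exp)
  show "pathstart left_half_circle = window_top" "pathfinish left_half_circle = window_bottom"
       "pathstart right_half_circle = window_top" "pathfinish right_half_circle = window_bottom"
    by (simp_all only: pathstart_part_circlepath pathfinish_part_circlepath exi cisi cis_3pi_half)
       (simp_all add: complex_eq_iff)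
qed

lemma path_image_half_circles:
  "path_image left_half_circle = (\<lambda>x. 1/2 + complex_of_real 3 * cis x) ` {pi/2..3*pi/2}"
  "path_image right_half_circle = (\<lambda>x. 1/2 + complex_of_real 3 * cis x) ` {-pi/2..pi/2}"
  by (simp_all add: path_image_part_circlepath' closed_segment_eq_real_ivl pi_gt_zero not_le)

lemma Re_left_half_circle: "w \<in> path_image left_half_circle \<Longrightarrow> Re w \<le> 1/2"
proof -
  assume "w \<in> path_image left_half_circle"
  then obtain x where x: "x \<in> {pi/2..3*pi/2}" "w = 1/2 + complex_of_real 3 * cis x"
    unfolding path_image_half_circles by blast
  have "0 \<le> cos (x - pi)" using x by (intro cos_ge_zero) auto
  then show ?thesis using x by (simp add: cos_diff)
qed

lemma Re_right_half_circle: "w \<in> path_image right_half_circle \<Longrightarrow> 1/2 \<le> Re w"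
proof -
  assume "w \<in> path_image right_half_circle"
  then obtain x where x: "x \<in> {-pi/2..pi/2}" "w = 1/2 + complex_of_real 3 * cis x"
    unfolding path_image_half_circles by blast
  have "0 \<le> cos x" using x by (intro cos_ge_zero) auto
  then show ?thesis using x by simp
qed

lemma half_circles_Un: "path_image left_half_circle \<union> path_image right_half_circle = sphere (1/2) 3"
proof
  show "path_image left_half_circle \<union> path_image right_half_circle \<subseteq> sphere (1/2) 3"
    using path_image_part_circlepath_subset'[of 3 "1/2"] by auto
  show "sphere (1/2) 3 \<subseteq> path_image left_half_circle \<union> path_image right_half_circle"
  proof
    fix w :: complex assume "w \<in> sphere (1/2) 3"
    define v where "v = (w - 1/2) / 3"
    have "cmod v = 1" using \<open>w \<in> sphere (1/2) 3\<close>
      by (simp add: v_def dist_norm norm_divide norm_minus_commute)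
    then have sq: "(Re v)^2 + (Im v)^2 = 1" and b: "-1 \<le> Im v" "Im v \<le> 1"
      using abs_Im_le_cmod[of v] by (auto simp: cmod_def)
    have r: "sqrt (1 - (Im v)^2) = \<bar>Re v\<bar>" using sq by (metis add_diff_cancel_right' real_sqrt_abs)
    have w: "w = 1/2 + 3 * v" by (simp add: v_def field_simps)
    show "w \<in> path_image left_half_circle \<union> path_image right_half_circle"
    proof (cases "0 \<le> Re v")
      case True
      have "cis (arcsin (Im v)) = v" using True b r
        by (simp add: complex_eq_iff cos_arcsin sin_arcsin)
      moreover have "arcsin (Im v) \<in> {-pi/2..pi/2}" using arcsin_bounded[OF b] by simp
      ultimately show ?thesis using w unfolding path_image_half_circles
        by (intro UnI2 image_eqI[where x = "arcsin (Im v)"]) auto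
    next
      case False
      have "cis (pi - arcsin (Im v)) = v"
        using False b r by (simp add: complex_eq_iff cos_arcsin sin_arcsin cos_diff sin_diff)
      moreover have "pi - arcsin (Im v) \<in> {pi/2..3*pi/2}" using arcsin_bounded[OF b] by simp
      ultimately show ?thesis using w unfolding path_image_half_circles
        by (intro UnI1 image_eqI[where x = "pi - arcsin (Im v)"]) auto
    qed
  qed
qed

lemma sphere_Re_half: "w \<in> sphere (1/2) 3 \<Longrightarrow> Re w = 1/2 \<Longrightarrow> w = window_top \<or> w = window_bottom"
proof -
  assume w: "w \<in> sphere (1/2) 3" "Re w = 1/2"
  then have "\<bar>Im w\<bar> = 3" using dist_half_eq_abs_Im[of w] by simp
  then show ?thesis using w(2) by (auto simp: complex_eq_iff abs_if split: if_splits)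
qed

lemma half_circles_Int:
  "path_image left_half_circle \<inter> path_image right_half_circle = {window_top, window_bottom}"
proof
  show "path_image left_half_circle \<inter> path_image right_half_circle \<subseteq> {window_top, window_bottom}"
  proof
    fix w assume w: "w \<in> path_image left_half_circle \<inter> path_image right_half_circle"
    then have "Re w = 1/2" using Re_left_half_circle Re_right_half_circle
      by (meson IntD1 IntD2 antisym)
    moreover have "w \<in> sphere (1/2) 3" using w half_circles_Un by blast
    ultimately show "w \<in> {window_top, window_bottom}" using sphere_Re_half by blast
  qed
  show "{window_top, window_bottom} \<subseteq> path_image left_half_circle \<inter> path_image right_half_circle"
    using half_circle_ends pathstart_in_path_image[of left_half_circle]
      pathfinish_in_path_image[of left_half_circle] pathstart_in_path_image[of right_half_circle]
      pathfinish_in_path_image[of right_half_circle] by auto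
qed

lemma ray_not_in_inside:
  fixes S :: "'a::real_normed_vector set"
  assumes ray: "\<And>s. s \<ge> 0 \<Longrightarrow> z + s *\<^sub>R d \<notin> S" and "d \<noteq> 0"
  shows "z \<notin> inside S"
proof
  assume "z \<in> inside S"
  define R where "R = (\<lambda>s. z + s *\<^sub>R d) ` {0..}"
  have "connected R" unfolding R_def
    by (intro connected_continuous_image continuous_intros)
       (auto simp: is_interval_connected is_interval_ci)
  moreover have "R \<subseteq> - S" using ray by (auto simp: R_def)
  moreover have "z \<in> R" by (force simp: R_def)
  ultimately have "R \<subseteq> connected_component_set (- S) z"
    by (rule connected_component_maximal[rotated])
  moreover have "bounded (connected_component_set (- S) z)" using \<open>z \<in> inside S\<close>
    by (simp add: inside_def)
  ultimately obtain B where B: "\<And>x. x \<in> R \<Longrightarrow> norm x \<le> B" by (meson bounded_iff bounded_subset)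
  define s where "s = (\<bar>B\<bar> + norm z + 1) / norm d"
  have "s \<ge> 0" by (simp add: s_def)
  then have "norm (z + s *\<^sub>R d) \<le> B" by (intro B) (auto simp: R_def)
  moreover have "norm (s *\<^sub>R d) = \<bar>B\<bar> + norm z + 1"
    using \<open>s \<ge> 0\<close> \<open>d \<noteq> 0\<close> by (simp add: s_def)
  moreover have "norm (s *\<^sub>R d) \<le> norm (z + s *\<^sub>R d) + norm z"
    by (metis add.commute add_diff_cancel_right' norm_triangle_ineq4)
  ultimately show False by linarith
qed

lemma crosscut_rays_not_inside:
  assumes c_strip: "path_image c \<subseteq> strip_window \<union> {window_top, window_bottom}"
  shows "Re w \<le> 1/3 \<Longrightarrow> w \<notin> inside (path_image right_half_circle \<union> path_image c)"
    and "2/3 \<le> Re w \<Longrightarrow> w \<notin> inside (path_image left_half_circle \<union> path_image c)"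
proof -
  have off_c: "p \<notin> path_image c" if "Re p \<le> 1/3 \<or> 2/3 \<le> Re p" for p
  proof -
    have "p \<notin> strip_window \<union> {window_top, window_bottom}" using that
      by (auto simp: strip_window_def)
    then show ?thesis using c_strip by blast
  qed
  show "w \<notin> inside (path_image right_half_circle \<union> path_image c)" if "Re w \<le> 1/3"
  proof (rule ray_not_in_inside[where d = "-1"])
    fix s :: real assume "0 \<le> s"
    then have Re: "Re (w + s *\<^sub>R -1) \<le> 1/3" using that by simp
    then have "w + s *\<^sub>R -1 \<notin> path_image right_half_circle" using Re_right_half_circle by fastforce
    then show "w + s *\<^sub>R -1 \<notin> path_image right_half_circle \<union> path_image c" using off_c Re by blast
  qed simp
  show "w \<notin> inside (path_image left_half_circle \<union> path_image c)" if "2/3 \<le> Re w"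
  proof (rule ray_not_in_inside[where d = 1])
    fix s :: real assume "0 \<le> s"
    then have Re: "2/3 \<le> Re (w + s *\<^sub>R 1)" using that by simp
    then have "w + s *\<^sub>R 1 \<notin> path_image left_half_circle" using Re_left_half_circle by fastforce
    then show "w + s *\<^sub>R 1 \<notin> path_image left_half_circle \<union> path_image c" using off_c Re by blast
  qed simp
qed

lemma strip_window_crosscut_separates:
  assumes c: "arc c" "pathstart c = window_top" "pathfinish c = window_bottom"
    and c_strip: "path_image c \<subseteq> strip_window \<union> {window_top, window_bottom}"
  obtains I1 I2 where "open I1" "open I2" "I1 \<inter> I2 = {}" "ball (1/2) 3 - path_image c \<subseteq> I1 \<union> I2"
    "\<And>w. Re w \<le> 1/3 \<Longrightarrow> w \<notin> I2" "\<And>w. 2/3 \<le> Re w \<Longrightarrow> w \<notin> I1"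
proof -
  let ?C1 = "path_image left_half_circle" and ?C2 = "path_image right_half_circle"
  let ?C = "path_image c"
  have ends: "window_top \<in> ?C" "window_bottom \<in> ?C"
    using c by (metis pathstart_in_path_image pathfinish_in_path_image)+
  have "?C \<inter> sphere (1/2) 3 \<subseteq> {window_top, window_bottom}"
    using c_strip strip_window_subset_ball by fastforce
  then have C1C: "?C1 \<inter> ?C = {window_top, window_bottom}"
    and C2C: "?C2 \<inter> ?C = {window_top, window_bottom}"
    using ends half_circles_Un half_circles_Int by auto
  have inj: "inj_on c {0..1}" using c(1) by (simp add: arc_def)
  have "c (1/2) \<noteq> c 0" "c (1/2) \<noteq> c 1"
    using inj_onD[OF inj, of "1/2" 0] inj_onD[OF inj, of "1/2" 1] by auto
  moreover have "c (1/2) \<in> ?C" by (simp add: path_image_def)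
  ultimately have "c (1/2) \<in> strip_window"
    using c(2,3) c_strip by (auto simp: pathstart_def pathfinish_def)
  moreover have inside_circle: "inside (?C1 \<union> ?C2) = ball (1/2) 3"
    using inside_frontier_eq_interior[of "cball (1/2::complex) 3"] half_circles_Un by simp
  ultimately have "?C \<inter> inside (?C1 \<union> ?C2) \<noteq> {}"
    using strip_window_subset_ball \<open>c (1/2) \<in> ?C\<close> by auto
  then obtain disj: "inside (?C1 \<union> ?C) \<inter> inside (?C2 \<union> ?C) = {}"
    and split: "inside (?C1 \<union> ?C) \<union> inside (?C2 \<union> ?C) \<union> (?C - {window_top, window_bottom})
      = inside (?C1 \<union> ?C2)"
    using split_inside_simple_closed_curve[OF _ half_circle_ends(1,2) _ half_circle_ends(3,4)
        arc_imp_simple_path[OF c(1)] c(2,3) _ half_circles_Int C1C C2C]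
    by (auto simp: simple_path_part_circlepath)
  show thesis
  proof (rule that[of "inside (?C1 \<union> ?C)" "inside (?C2 \<union> ?C)"])
    show "open (inside (?C1 \<union> ?C))" "open (inside (?C2 \<union> ?C))"
      using c(1) by (auto intro!: open_inside closed_path_image simp: arc_imp_path)
    show "ball (1/2) 3 - ?C \<subseteq> inside (?C1 \<union> ?C) \<union> inside (?C2 \<union> ?C)"
      using split inside_circle by blast
    show "w \<notin> inside (?C2 \<union> ?C)" if "Re w \<le> 1/3" for w
      using crosscut_rays_not_inside(1)[OF c_strip that] .
    show "w \<notin> inside (?C1 \<union> ?C)" if "2/3 \<le> Re w" for w
      using crosscut_rays_not_inside(2)[OF c_strip that] .
  qed (use disj in auto)
qed

lemma strip_window_vertical_Diff:
  assumes "L \<subseteq> cball 0 1" "Re w = 1/2" "1 < \<bar>Im w\<bar>" "\<bar>Im w\<bar> < 3"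
  shows "w \<in> strip_window - L"
proof -
  have "\<bar>Im z\<bar> \<le> 1" if "z \<in> L" for z
    using assms(1) that abs_Im_le_cmod[of z] by auto
  then show ?thesis using assms(2-4) dist_half_eq_abs_Im[of w] by (force simp: strip_window_def)
qed

lemma arc_across_strip_window:
  assumes conn: "connected (strip_window - L)" and "compact L" and L_disc: "L \<subseteq> cball 0 1"
  obtains c where "arc c" "pathstart c = window_top" "pathfinish c = window_bottom"
    "path_image c \<subseteq> (strip_window - L) \<union> {window_top, window_bottom}"
proof -
  note vertical = strip_window_vertical_Diff[OF L_disc]
  define t b where "t = Complex (1/2) (5/2)" and "b = Complex (1/2) (-5/2)"
  have "path_connected (strip_window - L)"
    using conn open_strip_window \<open>compact L\<close>
    by (simp add: connected_open_path_connected open_Diff compact_imp_closed)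
  moreover have "t \<in> strip_window - L" "b \<in> strip_window - L"
    by (rule vertical; simp add: t_def b_def)+
  ultimately obtain g where
    g: "path g" "path_image g \<subseteq> strip_window - L" "pathstart g = t" "pathfinish g = b"
    by (meson path_component_def path_connected_component)
  define \<gamma> where "\<gamma> = linepath window_top t +++ g +++ linepath b window_bottom"
  have "closed_segment window_top t \<subseteq> (strip_window - L) \<union> {window_top}"
  proof
    fix w assume "w \<in> closed_segment window_top t"
    then have "Re w = 1/2" "5/2 \<le> Im w" "Im w \<le> 3"
      by (auto simp: closed_segment_same_Re closed_segment_eq_real_ivl t_def)
    then show "w \<in> (strip_window - L) \<union> {window_top}"
      using vertical[of w] by (cases "Im w = 3") (auto simp: complex_eq_iff)
  qed
  moreover have "closed_segment b window_bottom \<subseteq> (strip_window - L) \<union> {window_bottom}"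
  proof
    fix w assume "w \<in> closed_segment b window_bottom"
    then have "Re w = 1/2" "-3 \<le> Im w" "Im w \<le> -5/2"
      by (auto simp: closed_segment_same_Re closed_segment_eq_real_ivl b_def)
    then show "w \<in> (strip_window - L) \<union> {window_bottom}"
      using vertical[of w] by (cases "Im w = -3") (auto simp: complex_eq_iff)
  qed
  ultimately have img: "path_image \<gamma> \<subseteq> (strip_window - L) \<union> {window_top, window_bottom}"
    using g by (auto simp: \<gamma>_def path_image_join)
  have \<gamma>: "path \<gamma>" "pathstart \<gamma> = window_top" "pathfinish \<gamma> = window_bottom"
    using g by (auto simp: \<gamma>_def)
  have "window_top \<noteq> window_bottom" by (simp add: complex_eq_iff)
  then obtain c where "arc c" "path_image c \<subseteq> path_image \<gamma>"
      "pathstart c = window_top" "pathfinish c = window_bottom"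
    using path_contains_arc[OF \<gamma>] by blast
  then show thesis using that img by blast
qed

lemma continuum_disconnects_strip_window:
  assumes "compact L" "connected L" "0 \<in> L" "1 \<in> L" and L_disc: "L \<subseteq> cball 0 1"
  shows "\<not> connected (strip_window - L)"
proof
  assume "connected (strip_window - L)"
  then obtain c where c: "arc c" "pathstart c = window_top" "pathfinish c = window_bottom"
      and c_strip: "path_image c \<subseteq> (strip_window - L) \<union> {window_top, window_bottom}"
    using arc_across_strip_window \<open>compact L\<close> L_disc by blast
  have "path_image c \<subseteq> strip_window \<union> {window_top, window_bottom}" using c_strip by blast
  then obtain I1 I2 where I: "open I1" "open I2" "I1 \<inter> I2 = {}"
      "ball (1/2) 3 - path_image c \<subseteq> I1 \<union> I2"
      and left: "\<And>w. Re w \<le> 1/3 \<Longrightarrow> w \<notin> I2" and right: "\<And>w. 2/3 \<le> Re w \<Longrightarrow> w \<notin> I1"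
    using strip_window_crosscut_separates[OF c] by metis
  have Im_L: "\<bar>Im z\<bar> \<le> 1" if "z \<in> L" for z
    using L_disc that abs_Im_le_cmod[of z] by auto
  have L_ball: "L \<subseteq> ball (1/2) 3"
  proof
    fix z assume "z \<in> L"
    then have "norm z \<le> 1" using L_disc by auto
    then have "dist (1/2) z \<le> 1/2 + 1" using norm_triangle_ineq4[of "1/2" z]
      by (simp add: dist_norm)
    then show "z \<in> ball (1/2) 3" by simp
  qed
  have "window_top \<notin> L" "window_bottom \<notin> L"
    using Im_L[of window_top] Im_L[of window_bottom] by auto
  then have "L \<inter> path_image c = {}" using c_strip by blast
  then have L_I: "L \<subseteq> I1 \<union> I2" using L_ball I(4) by blast
  have "0 \<notin> I2" "1 \<notin> I1" by (rule left, simp) (rule right, simp)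
  then have "0 \<in> I1" "1 \<in> I2" using L_I assms(3,4) by blast+
  moreover have "I1 \<inter> I2 \<inter> L = {}" using I(3) by blast
  ultimately show False
    using connectedD[OF \<open>connected L\<close> I(1,2) _ L_I] assms(3,4) by blast
qed

lemma connected_Diff_subset_nowhere_dense:
  assumes "open V" "connected (V - F)" "interior F = {}" "L \<subseteq> F"
  shows "connected (V - L)"
proof (rule connected_intermediate_closure[OF assms(2)])
  show "V - F \<subseteq> V - L" using assms(4) by blast
  have "closure (- F) = UNIV" using assms(3) by (simp add: closure_interior)
  then have "V \<subseteq> closure (V \<inter> - F)" using open_Int_closure_subset[OF assms(1), of "- F"] by simp
  then show "V - L \<subseteq> closure (V - F)" by (auto simp: Diff_eq)
qed

lemma affine_image_strip_window:
  fixes y d :: complex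
  assumes "d \<noteq> 0"
  shows "open ((\<lambda>w. y + d * w) ` strip_window)" "connected ((\<lambda>w. y + d * w) ` strip_window)"
    and "(\<lambda>w. y + d * w) ` strip_window \<subseteq> ball y (4 * norm d)"
proof -
  have "(\<lambda>w. y + d * w) ` strip_window = (\<lambda>z. (z - y) / d) -` strip_window"
  proof
    show "(\<lambda>z. (z - y) / d) -` strip_window \<subseteq> (\<lambda>w. y + d * w) ` strip_window"
    proof
      fix z assume "z \<in> (\<lambda>z. (z - y) / d) -` strip_window"
      moreover have "z = y + d * ((z - y) / d)" using assms by simp
      ultimately show "z \<in> (\<lambda>w. y + d * w) ` strip_window" by blast
    qed
  qed (use assms in auto)
  moreover have "continuous_on UNIV (\<lambda>z. (z - y) / d)" using assms by (intro continuous_intros) auto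
  ultimately show "open ((\<lambda>w. y + d * w) ` strip_window)"
    using open_vimage[OF open_strip_window] by simp
  show "connected ((\<lambda>w. y + d * w) ` strip_window)"
    using connected_strip_window by (intro connected_continuous_image continuous_intros)
  show "(\<lambda>w. y + d * w) ` strip_window \<subseteq> ball y (4 * norm d)"
  proof
    fix z assume "z \<in> (\<lambda>w. y + d * w) ` strip_window"
    then obtain w where "w \<in> strip_window" "z = y + d * w" by blast
    then have "norm (w - 1/2) < 3" using strip_window_subset_ball
      by (auto simp: dist_norm norm_minus_commute)
    then have "norm w < 4" using norm_triangle_ineq2[of w "1/2"] by simp
    then have "norm d * norm w < norm d * 4" using assms by simp
    then show "z \<in> ball y (4 * norm d)" using \<open>z = y + d * w\<close>
      by (simp add: dist_norm norm_mult mult.commute)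
  qed
qed

lemma nonseparating_set_contains_no_continuum:
  fixes E F L :: "complex set"
  assumes F_nowhere_dense: "interior F = {}"
    and F_nonsep: "\<And>V. open V \<Longrightarrow> connected V \<Longrightarrow> V \<subseteq> E \<Longrightarrow> connected (V - F)"
    and L: "compact L" "connected L" "y \<in> L" "p \<in> L" "y \<noteq> p"
    and L_small: "L \<subseteq> cball y (dist y p)" and E_big: "ball y (4 * dist y p) \<subseteq> E"
  shows "\<not> L \<subseteq> F"
proof
  assume "L \<subseteq> F"
  define d where "d = p - y"
  define g where "g = (\<lambda>z. (z - y) / d)"
  define V where "V = (\<lambda>w. y + d * w) ` strip_window"
  have "d \<noteq> 0" and norm_d: "norm d = dist y p"
    using L(5) by (auto simp: d_def dist_norm norm_minus_commute)
  note V = affine_image_strip_window[OF \<open>d \<noteq> 0\<close>, of y, folded V_def]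
  have "V \<subseteq> E" using V(3) E_big norm_d by simp
  then have "connected (V - F)" using F_nonsep V(1,2) by blast
  then have "connected (V - L)"
    using connected_Diff_subset_nowhere_dense[OF V(1) _ F_nowhere_dense \<open>L \<subseteq> F\<close>] by blast
  then have "connected (g ` (V - L))"
    unfolding g_def using \<open>d \<noteq> 0\<close> by (intro connected_continuous_image continuous_intros) auto
  moreover have "g ` (V - L) = strip_window - g ` L"
  proof -
    have "inj g" using \<open>d \<noteq> 0\<close> by (auto simp: g_def inj_on_def)
    moreover have "g ` V = strip_window" using \<open>d \<noteq> 0\<close> by (simp add: V_def g_def image_image)
    ultimately show ?thesis by (simp add: image_set_diff)
  qed
  moreover have "\<not> connected (strip_window - g ` L)"
  proof (rule continuum_disconnects_strip_window)
    show "compact (g ` L)" "connected (g ` L)"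
      unfolding g_def using L(1,2) \<open>d \<noteq> 0\<close>
      by (auto intro!: compact_continuous_image connected_continuous_image continuous_intros)
    have "g y = 0" "g p = 1" using \<open>d \<noteq> 0\<close> by (simp_all add: g_def d_def)
    then show "0 \<in> g ` L" "1 \<in> g ` L" using L(3,4) by (metis image_eqI)+
    show "g ` L \<subseteq> cball 0 1"
    proof
      fix w assume "w \<in> g ` L"
      then obtain z where "z \<in> L" "w = g z" by blast
      then have "norm (z - y) \<le> norm d" using L_small norm_d
        by (auto simp: dist_norm norm_minus_commute)
      then show "w \<in> cball 0 1"
        using \<open>w = g z\<close> \<open>d \<noteq> 0\<close> by (simp add: g_def norm_divide divide_le_eq_1)
    qed
  qed
  ultimately show False by simp
qed

section \<open>Subharmonic functions\<close>

lemma subharmonic_on_imp_open: "subharmonic_on \<Omega> u \<Longrightarrow> open \<Omega>"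
  by (simp add: subharmonic_on_def)

lemma subharmonic_on_const:
  assumes "open \<Omega>"
  shows "subharmonic_on \<Omega> (\<lambda>_. ereal k)"
  unfolding subharmonic_on_def
proof (intro conjI ballI assms)
  fix z assume "z \<in> \<Omega>"
  show "Limsup (at z) (\<lambda>_. ereal k) \<le> ereal k" by (rule Limsup_bounded) simp
  show "ereal k < \<infinity>" by simp
next
  fix a assume "a \<in> \<Omega>"
  then obtain e where e: "e > 0" "ball a e \<subseteq> \<Omega>" using assms open_contains_ball by blast
  show "\<exists>r0>0. \<forall>r. 0 < r \<and> r < r0 \<longrightarrow> cball a r \<subseteq> \<Omega> \<and>
        (\<forall>\<phi>. continuous_on (sphere a r) \<phi> \<and> (\<forall>z\<in>sphere a r. ereal k \<le> ereal (\<phi> z))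
              \<longrightarrow> ereal k \<le> ereal (circle_mean \<phi> a r))"
  proof (intro exI[of _ e] conjI allI impI e(1))
    fix r \<phi> assume r: "0 < r \<and> r < e"
    then have "cball a r \<subseteq> ball a e" by (simp add: cball_subset_ball_iff)
    then show "cball a r \<subseteq> \<Omega>" using e(2) by blast
    assume \<phi>: "continuous_on (sphere a r) \<phi> \<and> (\<forall>z\<in>sphere a r. ereal k \<le> ereal (\<phi> z))"
    have on_sphere: "a + complex_of_real r * cis t \<in> sphere a r" for t
      using r by (simp add: dist_norm norm_mult)
    have "continuous_on {0..2*pi} (\<lambda>t. a + complex_of_real r * cis t)" by (intro continuous_intros)
    then have "continuous_on {0..2*pi} (\<lambda>t. \<phi> (a + complex_of_real r * cis t))"
      using on_sphere by (intro continuous_on_compose2[OF conjunct1[OF \<phi>]]) auto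
    then have "(\<lambda>t. \<phi> (a + complex_of_real r * cis t)) integrable_on {0..2*pi}"
      by (rule integrable_continuous_real)
    moreover have "k \<le> \<phi> (a + complex_of_real r * cis t)" for t
      using \<phi> on_sphere by simp
    ultimately have "integral {0..2*pi} (\<lambda>t. k)
        \<le> integral {0..2*pi} (\<lambda>t. \<phi> (a + complex_of_real r * cis t))"
      by (intro integral_le) auto
    then show "ereal k \<le> ereal (circle_mean \<phi> a r)" by (simp add: circle_mean_def field_simps)
  qed
qed

lemma subharmonic_on_less_ball:
  assumes sh: "subharmonic_on \<Omega> u" and z: "z \<in> \<Omega>" and less: "u z < c"
  shows "\<exists>e>0. ball z e \<subseteq> \<Omega> \<and> (\<forall>w\<in>ball z e. u w < c)"
proof -
  have "Limsup (at z) u \<le> u z" using sh z by (simp add: subharmonic_on_def)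
  then have "Limsup (at z) u < c" using less by simp
  then have "eventually (\<lambda>w. u w < c) (at z)" by (rule Limsup_lessD)
  then obtain d where d: "d > 0" "\<And>w. w \<noteq> z \<Longrightarrow> dist w z < d \<Longrightarrow> u w < c"
    by (auto simp: eventually_at)
  obtain e where e: "e > 0" "ball z e \<subseteq> \<Omega>"
    using subharmonic_on_imp_open[OF sh] z open_contains_ball by blast
  have "u w < c" if "w \<in> ball z (min d e)" for w
    using that d less by (cases "w = z") (auto simp: dist_commute)
  moreover have "ball z (min d e) \<subseteq> \<Omega>" using e by auto
  ultimately show ?thesis using d(1) e(1) by (intro exI[of _ "min d e"]) auto
qed

lemma open_sublevel_subharmonic:
  assumes "subharmonic_on \<Omega> u"
  shows "open {z \<in> \<Omega>. u z < c}"
  unfolding open_contains_ball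
proof
  fix z assume "z \<in> {z \<in> \<Omega>. u z < c}"
  then obtain e where "e > 0" "ball z e \<subseteq> \<Omega>" "\<forall>w\<in>ball z e. u w < c"
    using subharmonic_on_less_ball[OF assms] by blast
  then show "\<exists>e>0. ball z e \<subseteq> {z \<in> \<Omega>. u z < c}" by blast
qed

lemma compact_superlevel_subharmonic:
  assumes "subharmonic_on \<Omega> u" "compact K" "K \<subseteq> \<Omega>"
  shows "compact {z \<in> K. c \<le> u z}"
proof -
  have "{z \<in> K. c \<le> u z} = K \<inter> - {z \<in> \<Omega>. u z < c}" using assms(3) by (auto simp: not_less)
  moreover have "closed (- {z \<in> \<Omega>. u z < c})"
    using open_sublevel_subharmonic[OF assms(1)] by (rule closed_Compl)
  ultimately show ?thesis using assms(2) by (simp add: compact_Int_closed)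
qed

lemma subharmonic_attains_max:
  assumes sh: "subharmonic_on \<Omega> u" and K: "compact K" "K \<subseteq> \<Omega>" "K \<noteq> {}"
  shows "\<exists>z\<in>K. \<forall>w\<in>K. u w \<le> u z"
proof -
  define M where "M = Sup (u ` K)"
  have "K \<inter> (\<Inter>c\<in>{c. c < M}. {z \<in> K. c \<le> u z}) \<noteq> {}"
  proof (rule compact_imp_fip_image[OF K(1)])
    show "closed {z \<in> K. c \<le> u z}" for c
      using compact_superlevel_subharmonic[OF sh K(1,2)] by (rule compact_imp_closed)
  next
    fix C assume C: "finite C" "C \<subseteq> {c. c < M}"
    show "K \<inter> (\<Inter>c\<in>C. {z \<in> K. c \<le> u z}) \<noteq> {}"
    proof (cases "C = {}")
      case True then show ?thesis using K by simp
    next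
      case False
      have "Max C < M" using Max_in[OF C(1) False] C(2) by blast
      then obtain z where z: "z \<in> K" "Max C < u z" by (auto simp: M_def less_Sup_iff)
      have "c \<le> u z" if "c \<in> C" for c
        using Max_ge[OF C(1) that] z(2) by (meson less_imp_le order.strict_trans1)
      then show ?thesis using z by blast
    qed
  qed
  then obtain z where z: "z \<in> K" "\<And>c. c < M \<Longrightarrow> c \<le> u z" by blast
  have "M \<le> u z" by (rule dense_le) (rule z(2))
  moreover have "\<forall>w\<in>K. u w \<le> M" by (simp add: M_def SUP_upper)
  ultimately show ?thesis using z(1) order_trans by blast
qed

lemma integral_max_0_2cos_minus_1_pos: "integral {0..2*pi} (\<lambda>t. max 0 (2 * cos t - 1)) > 0"
proof -
  have cont: "continuous_on {0..2*pi} (\<lambda>t. max 0 (2 * cos t - 1))"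
    by (intro continuous_intros)
  have nonneg: "\<And>t. t \<in> {0..2*pi} \<Longrightarrow> max 0 (2 * cos t - 1) \<ge> 0" by simp
  have "integral {0..2*pi} (\<lambda>t. max 0 (2 * cos t - 1)) \<ge> 0"
    using cont nonneg by (intro integral_nonneg integrable_continuous_real) auto
  moreover have "integral {0..2*pi} (\<lambda>t. max 0 (2 * cos t - 1)) \<noteq> 0"
  proof
    assume "integral {0..2*pi} (\<lambda>t. max 0 (2 * cos t - 1)) = 0"
    then have "\<forall>x\<in>{0..2*pi}. max 0 (2 * cos x - 1) = 0"
      using integral_eq_0_iff[OF cont _ nonneg] by simp
    moreover have "(0::real) \<in> {0..2*pi}" by simp
    ultimately have "max 0 (2 * cos 0 - 1) = (0::real)" by blast
    then show False by simp
  qed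
  ultimately show ?thesis by linarith
qed

lemma circle_mean_tent:
  assumes "0 < r"
  defines "I \<equiv> integral {0..2*pi} (\<lambda>t. max 0 (2 * cos t - 1))"
  shows "circle_mean (\<lambda>z. m - (m - d) * max 0 ((Re (z - z0) - r/2) / (r/2))) z0 r
    = m - (m - d) * I / (2*pi)"
proof -
  have "(Re (z0 + complex_of_real r * cis t - z0) - r/2) / (r/2) = 2 * cos t - 1" for t
    using assms by (simp add: field_simps)
  then have "integral {0..2*pi}
      (\<lambda>t. m - (m - d) * max 0 ((Re (z0 + complex_of_real r * cis t - z0) - r/2) / (r/2)))
      = integral {0..2*pi} (\<lambda>t. m - (m - d) * max 0 (2 * cos t - 1))"
    by simp
  also have "\<dots> = integral {0..2*pi} (\<lambda>t. m)
      - integral {0..2*pi} (\<lambda>t. (m - d) * max 0 (2 * cos t - 1))"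
    by (rule integral_diff) (auto intro!: integrable_continuous_real continuous_intros)
  also have "\<dots> = 2*pi*m - (m - d) * I"
    by (simp add: I_def)
  finally have "circle_mean (\<lambda>z. m - (m - d) * max 0 ((Re (z - z0) - r/2) / (r/2))) z0 r
      = (2*pi*m - (m - d) * I) / (2*pi)"
    by (simp add: circle_mean_def)
  also have "\<dots> = m - (m - d) * I / (2*pi)" by (simp add: field_simps)
  finally show ?thesis .
qed

lemma subharmonic_right_arc_bound:
  assumes sh: "subharmonic_on \<Omega> u" and "z0 \<in> \<Omega>"
  obtains r0 where "r0 > 0"
    "\<And>r m d. 0 < r \<Longrightarrow> r < r0 \<Longrightarrow> d \<le> m \<Longrightarrow> (\<And>w. w \<in> sphere z0 r \<Longrightarrow> u w \<le> ereal m) \<Longrightarrow>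
      (\<And>w. w \<in> sphere z0 r \<Longrightarrow> Re z0 + r/2 \<le> Re w \<Longrightarrow> u w \<le> ereal d) \<Longrightarrow>
      u z0 \<le> ereal (m - (m - d) * integral {0..2*pi} (\<lambda>t. max 0 (2 * cos t - 1)) / (2*pi))"
proof -
  obtain r0 where r0: "r0 > 0" and mean: "\<And>r \<phi>. 0 < r \<Longrightarrow> r < r0 \<Longrightarrow> continuous_on (sphere z0 r) \<phi> \<Longrightarrow>
      (\<forall>z\<in>sphere z0 r. u z \<le> ereal (\<phi> z)) \<Longrightarrow> u z0 \<le> ereal (circle_mean \<phi> z0 r)"
    using sh \<open>z0 \<in> \<Omega>\<close> unfolding subharmonic_on_def by metis
  show thesis
  proof (rule that[OF r0])
    fix r m d assume r: "0 < r" "r < r0" and "d \<le> m"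
      and le_m: "\<And>w. w \<in> sphere z0 r \<Longrightarrow> u w \<le> ereal m"
      and le_d: "\<And>w. w \<in> sphere z0 r \<Longrightarrow> Re z0 + r/2 \<le> Re w \<Longrightarrow> u w \<le> ereal d"
    \<comment> \<open>The sub-mean value inequality is only available for continuous majorants on the circle.\<close>
    define \<phi> where "\<phi> = (\<lambda>z. m - (m - d) * max 0 ((Re (z - z0) - r/2) / (r/2)))"
    have "continuous_on (sphere z0 r) \<phi>" unfolding \<phi>_def using r by (intro continuous_intros) auto
    moreover have "u w \<le> ereal (\<phi> w)" if w: "w \<in> sphere z0 r" for w
    proof (cases "Re z0 + r/2 \<le> Re w")
      case True
      have "Re (w - z0) \<le> r" using w abs_Re_le_cmod[of "w - z0"]
        by (auto simp: dist_norm norm_minus_commute)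
      then have "(m - d) * max 0 ((Re (w - z0) - r/2) / (r/2)) \<le> m - d"
        using r \<open>d \<le> m\<close> by (simp add: divide_le_eq_1 mult_left_le)
      then have "ereal d \<le> ereal (\<phi> w)" by (simp add: \<phi>_def)
      then show ?thesis using le_d[OF w True] by order
    next
      case False
      then have "\<phi> w = m" using r by (simp add: \<phi>_def divide_nonpos_pos)
      then show ?thesis using le_m[OF w] by simp
    qed
    ultimately have "u z0 \<le> ereal (circle_mean \<phi> z0 r)" using mean[OF r] by blast
    then show "u z0 \<le> ereal (m - (m - d) * integral {0..2*pi} (\<lambda>t. max 0 (2 * cos t - 1)) / (2*pi))"
      using circle_mean_tent[OF r(1), of m d z0] by (simp add: \<phi>_def)
  qed
qed

lemma subharmonic_local_max_right:
  assumes sh: "subharmonic_on \<Omega> u" and "0 < e" and ball: "ball z0 e \<subseteq> \<Omega>"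
    and max: "\<And>w. w \<in> ball z0 e \<Longrightarrow> u w \<le> u z0"
  shows "\<exists>w\<in>ball z0 e. Re z0 < Re w \<and> u z0 \<le> u w"
proof (rule ccontr)
  assume "\<not> ?thesis"
  then have right_less: "u w < u z0" if "w \<in> ball z0 e" "Re z0 < Re w" for w
    using that by (auto simp: not_le)
  have "z0 \<in> \<Omega>" using ball \<open>0 < e\<close> by auto
  then obtain r0 where "r0 > 0" and bound: "\<And>r m d. 0 < r \<Longrightarrow> r < r0 \<Longrightarrow> d \<le> m \<Longrightarrow>
      (\<And>w. w \<in> sphere z0 r \<Longrightarrow> u w \<le> ereal m) \<Longrightarrow>
      (\<And>w. w \<in> sphere z0 r \<Longrightarrow> Re z0 + r/2 \<le> Re w \<Longrightarrow> u w \<le> ereal d) \<Longrightarrow>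
      u z0 \<le> ereal (m - (m - d) * integral {0..2*pi} (\<lambda>t. max 0 (2 * cos t - 1)) / (2*pi))"
    using subharmonic_right_arc_bound[OF sh] by metis
  define r where "r = min (r0/2) (e/2)"
  have r: "0 < r" "r < r0" "r < e" using \<open>r0 > 0\<close> \<open>0 < e\<close> by (auto simp: r_def)
  then have sphere_ball: "sphere z0 r \<subseteq> ball z0 e" by auto
  define \<Gamma> where "\<Gamma> = sphere z0 r \<inter> {w. Re z0 + r/2 \<le> Re w}"
  have "compact \<Gamma>" unfolding \<Gamma>_def
    by (intro compact_Int_closed compact_sphere closed_Collect_le continuous_intros)
  moreover have "z0 + of_real r \<in> \<Gamma>" using r by (simp add: \<Gamma>_def dist_norm)
  moreover have \<Gamma>_ball: "\<Gamma> \<subseteq> ball z0 e" using sphere_ball by (auto simp: \<Gamma>_def)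
  ultimately obtain zg where "zg \<in> \<Gamma>" and zg_max: "\<And>w. w \<in> \<Gamma> \<Longrightarrow> u w \<le> u zg"
    using subharmonic_attains_max[OF sh, of \<Gamma>] ball by blast
  then have "zg \<in> ball z0 e" "Re z0 < Re zg" using \<Gamma>_ball r(1) by (auto simp: \<Gamma>_def)
  then have "u zg < u z0" by (rule right_less)
  moreover have "u z0 < \<infinity>" using sh \<open>z0 \<in> \<Omega>\<close> by (simp add: subharmonic_on_def)
  ultimately obtain m where m: "u z0 = ereal m" by (cases "u z0") auto
  obtain d where d: "d < m" "u zg \<le> ereal d"
  proof (cases "u zg")
    case (real d)
    then show thesis using that[of d] \<open>u zg < u z0\<close> m by auto
  next
    case MInf
    then show thesis using that[of "m - 1"] by simp
  qed (use \<open>u zg < u z0\<close> in simp)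
  have "u z0 \<le> ereal (m - (m - d) * integral {0..2*pi} (\<lambda>t. max 0 (2 * cos t - 1)) / (2*pi))"
  proof (rule bound[OF r(1,2)])
    show "d \<le> m" using d(1) by simp
    show "u w \<le> ereal m" if "w \<in> sphere z0 r" for w using max that sphere_ball m by auto
    show "u w \<le> ereal d" if "w \<in> sphere z0 r" "Re z0 + r/2 \<le> Re w" for w
      using zg_max[of w] d(2) that by (auto simp: \<Gamma>_def)
  qed
  moreover have "(m - d) * integral {0..2*pi} (\<lambda>t. max 0 (2 * cos t - 1)) / (2*pi) > 0"
    using d(1) integral_max_0_2cos_minus_1_pos by simp
  ultimately show False using m by simp
qed

lemma subharmonic_max_attained_outside_open:
  assumes sh: "subharmonic_on \<Omega> u" and K: "compact K" "K \<subseteq> \<Omega>" and "open W" "W \<subseteq> K"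
    and "z1 \<in> K" and z1_max: "\<And>w. w \<in> K \<Longrightarrow> u w \<le> u z1"
  shows "\<exists>z\<in>K - W. u z1 \<le> u z"
proof (rule ccontr)
  assume none: "\<not> ?thesis"
  define Z where "Z = {z \<in> K. u z1 \<le> u z}"
  have "Z \<subseteq> W" using none by (auto simp: Z_def)
  have "compact Z" unfolding Z_def using compact_superlevel_subharmonic[OF sh K] .
  moreover have "Z \<noteq> {}" using \<open>z1 \<in> K\<close> unfolding Z_def by blast
  moreover have "continuous_on Z Re" by (intro continuous_intros)
  ultimately obtain z0 where "z0 \<in> Z" and rightmost: "\<And>z. z \<in> Z \<Longrightarrow> Re z \<le> Re z0"
    by (metis continuous_attains_sup)
  then have "z0 \<in> K" "u z1 \<le> u z0" unfolding Z_def by blast+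
  then have "u z0 = u z1" using z1_max by (blast intro: antisym)
  obtain e where "e > 0" and ball_W: "ball z0 e \<subseteq> W"
    using \<open>open W\<close> \<open>z0 \<in> Z\<close> \<open>Z \<subseteq> W\<close> open_contains_ball by blast
  then have "ball z0 e \<subseteq> \<Omega>" using K(2) \<open>W \<subseteq> K\<close> by blast
  moreover have "u w \<le> u z0" if "w \<in> ball z0 e" for w
  proof -
    have "w \<in> K" using that ball_W \<open>W \<subseteq> K\<close> by blast
    then show ?thesis using z1_max \<open>u z0 = u z1\<close> by simp
  qed
  ultimately obtain w where "w \<in> ball z0 e" "Re z0 < Re w" "u z0 \<le> u w"
    using subharmonic_local_max_right[OF sh \<open>e > 0\<close>] by blast
  then have "w \<in> Z" using ball_W \<open>W \<subseteq> K\<close> \<open>u z0 = u z1\<close> by (auto simp: Z_def)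
  then show False using rightmost[of w] \<open>Re z0 < Re w\<close> by simp
qed

lemma subharmonic_maximum_principle:
  assumes sh: "subharmonic_on \<Omega> u" and W: "open W" "bounded W" "closure W \<subseteq> \<Omega>"
    and frontier_less: "\<And>z. z \<in> frontier W \<Longrightarrow> u z < c" and "y \<in> W"
  shows "u y < c"
proof -
  have K: "compact (closure W)" "W \<subseteq> closure W" using W(2) by (simp_all add: closure_subset)
  moreover have "closure W \<noteq> {}" using \<open>y \<in> W\<close> K(2) by blast
  ultimately obtain z1 where "z1 \<in> closure W" and z1_max: "\<And>w. w \<in> closure W \<Longrightarrow> u w \<le> u z1"
    using subharmonic_attains_max[OF sh K(1) W(3)] by blast
  then obtain z where "z \<in> closure W - W" "u z1 \<le> u z"
    using subharmonic_max_attained_outside_open[OF sh K(1) W(3,1) K(2)] by blast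
  moreover have "z \<in> frontier W" using calculation(1) W(1) by (simp add: frontier_def interior_open)
  ultimately have "u z1 < c" using frontier_less by (blast intro: le_less_trans)
  then show ?thesis using z1_max \<open>y \<in> W\<close> K(2) by (blast intro: le_less_trans)
qed

section \<open>Continua\<close>

lemma cut_wire_continuum_to_sphere:
  fixes Q :: "'a::euclidean_space set"
  assumes "compact Q" "x \<in> Q" "0 < R"
    and no_split: "\<And>U. compact U \<Longrightarrow> x \<in> U \<Longrightarrow> U \<subseteq> Q \<inter> ball x R \<Longrightarrow> compact (Q \<inter> cball x R - U) \<Longrightarrow> False"
  obtains C where "compact C" "connected C" "C \<subseteq> Q \<inter> cball x R" "x \<in> C" "C \<inter> sphere x R \<noteq> {}"
proof -
  have "\<exists>C. connected C \<and> C \<subseteq> Q \<inter> cball x R \<and> x \<in> C \<and> C \<inter> sphere x R \<noteq> {}"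
  proof (rule ccontr)
    assume no_continuum: "\<not> ?thesis"
    define X where "X = top_of_set (Q \<inter> cball x R)"
    have cK: "compact (Q \<inter> cball x R)" using assms(1) by (simp add: compact_Int_closed)
    then have "compact_space X" "Hausdorff_space X"
      by (simp_all add: X_def compact_space_subtopology Hausdorff_space_subtopology)
    moreover have "closedin X {x}" "closedin X (Q \<inter> sphere x R)"
      unfolding X_def using assms(1-3) by (auto intro!: closed_subset closed_Int compact_imp_closed)
    moreover have "disjnt C {x} \<or> disjnt C (Q \<inter> sphere x R)" if "connectedin X C" for C
      using that no_continuum by (auto simp: X_def connectedin_subtopology disjnt_def)
    ultimately have "separated_between X {x} (Q \<inter> sphere x R)"
      by (rule cut_wire_fence_theorem)
    then obtain U V where UV: "openin X U" "openin X V" "U \<union> V = topspace X" "disjnt U V"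
        "x \<in> U" "Q \<inter> sphere x R \<subseteq> V"
      unfolding separated_between_def by blast
    have top: "topspace X = Q \<inter> cball x R" by (simp add: X_def)
    have U_eq: "U = topspace X - V" and V_eq: "V = topspace X - U" using UV(3,4)
      by (auto simp: disjnt_def)
    have "closedin X U" unfolding U_eq using UV(2) openin_closedin_eq by blast
    moreover have "closedin X V" unfolding V_eq using UV(1) openin_closedin_eq by blast
    ultimately have "compact U" "compact V" using cK by (metis X_def closedin_compact)+
    moreover have "U \<subseteq> Q \<inter> ball x R"
    proof
      fix z assume "z \<in> U"
      then have "z \<in> Q \<inter> cball x R" "z \<notin> V" using U_eq top by auto
      then show "z \<in> Q \<inter> ball x R" using UV(6) by (auto simp: less_le)
    qed
    moreover have "Q \<inter> cball x R - U = V" using V_eq top by simp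
    ultimately show False using no_split UV(5) by metis
  qed
  then obtain C where C: "connected C" "C \<subseteq> Q \<inter> cball x R" "x \<in> C" "C \<inter> sphere x R \<noteq> {}"
    by blast
  have "closure C \<subseteq> Q \<inter> cball x R"
    using C(2) assms(1) by (intro closure_minimal) (auto intro: closed_Int compact_imp_closed)
  moreover have "compact (closure C)"
    using calculation assms(1)
      by (meson bounded_cball bounded_subset closed_closure compact_eq_bounded_closed le_inf_iff)
  ultimately show thesis
    using C closure_subset connected_imp_connected_closure by (intro that[of "closure C"]) blast+
qed

lemma continuum_boundary_bumping:
  fixes K :: "'a::euclidean_space set"
  assumes K: "compact K" "connected K" "y \<in> K" and "\<not> K \<subseteq> ball y R" "0 < R"
  obtains L where "compact L" "connected L" "L \<subseteq> K \<inter> cball y R" "y \<in> L" "L \<inter> sphere y R \<noteq> {}"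
proof (rule cut_wire_continuum_to_sphere[OF K(1,3) \<open>0 < R\<close>])
  fix U assume U: "compact U" "y \<in> U" "U \<subseteq> K \<inter> ball y R" and rest: "compact (K \<inter> cball y R - U)"
  define B where "B = (K - ball y R) \<union> (K \<inter> cball y R - U)"
  have "closed (K - ball y R)" using K(1) by (intro closed_Diff compact_imp_closed open_ball)
  then have "closed B" unfolding B_def using compact_imp_closed[OF rest] by (rule closed_Un)
  moreover have "closed U" "K \<subseteq> U \<union> B" "U \<inter> B \<inter> K = {}" "U \<inter> K \<noteq> {}" "B \<inter> K \<noteq> {}"
    using U assms(4) compact_imp_closed by (auto simp: B_def)
  ultimately show False using K(2) unfolding connected_closed by blast
qed

lemma subharmonic_superlevel_continuum:
  assumes sh: "subharmonic_on \<Omega> u" and r: "0 < r" "cball z0 r \<subseteq> \<Omega>" and "c < u z0"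
  obtains K where "compact K" "connected K" "K \<subseteq> {z \<in> cball z0 r. c \<le> u z}" "z0 \<in> K"
    "K \<inter> sphere z0 r \<noteq> {}"
proof -
  define Q where "Q = {z \<in> cball z0 r. c \<le> u z}"
  have "compact Q" unfolding Q_def
    by (rule compact_superlevel_subharmonic[OF sh compact_cball r(2)])
  moreover have "z0 \<in> Q" using \<open>c < u z0\<close> r(1) by (simp add: Q_def)
  \<comment> \<open>A piece U of Q cut off from the circle has a neighbourhood W with u < c on its frontier,
    so the maximum principle would give u z0 < c.\<close>
  moreover have False
    if U: "compact U" "z0 \<in> U" "U \<subseteq> Q \<inter> ball z0 r" "compact (Q \<inter> cball z0 r - U)" for U
  proof -
    define Z where "Z = (Q \<inter> cball z0 r - U) \<union> - ball z0 r"
    have "closed Z" unfolding Z_def using compact_imp_closed[OF U(4)]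
      by (intro closed_Un closed_Compl open_ball)
    moreover have "U \<inter> Z = {}" using U(3) by (auto simp: Z_def)
    ultimately obtain W V
      where W: "open W" "compact (closure W)" "open V" "U \<subseteq> W" "Z \<subseteq> V" "W \<inter> V = {}"
      using separation_normal_compact[OF U(1)] by metis
    have "closure W \<inter> V = {}" using W(3,6) by (simp add: open_Int_closure_eq_empty inf_commute)
    then have W_Z: "closure W \<inter> Z = {}" using W(5) by blast
    then have W_ball: "closure W \<subseteq> ball z0 r" by (auto simp: Z_def)
    have "u z0 < c"
    proof (rule subharmonic_maximum_principle[OF sh W(1)])
      show "bounded W" using W(2) compact_imp_bounded bounded_subset closure_subset by metis
      show "closure W \<subseteq> \<Omega>" using W_ball r(2) ball_subset_cball by blast
      show "z0 \<in> W" using U(2) W(4) by blast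
      fix z assume "z \<in> frontier W"
      then have "z \<in> closure W" "z \<notin> W" using W(1) by (auto simp: frontier_def interior_open)
      then have "z \<notin> Z" "z \<notin> U" "z \<in> cball z0 r" using W_Z W(4) W_ball by auto
      then have "z \<notin> Q" by (auto simp: Z_def)
      then show "u z < c" using \<open>z \<in> cball z0 r\<close> by (auto simp: Q_def not_le)
    qed
    then show False using \<open>c < u z0\<close> by simp
  qed
  ultimately obtain K where "compact K" "connected K" "K \<subseteq> Q \<inter> cball z0 r" "z0 \<in> K"
      "K \<inter> sphere z0 r \<noteq> {}"
    using cut_wire_continuum_to_sphere[OF _ _ r(1)] by metis
  then show thesis by (intro that) (auto simp: Q_def)
qed

lemma Baire_countable_closedin_cover:
  fixes K E :: "'a::euclidean_space set"
  assumes K: "compact K" "K \<noteq> {}" "K \<subseteq> E" and "countable \<G>"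
    and closed: "\<And>G. G \<in> \<G> \<Longrightarrow> closedin (top_of_set E) G" and cover: "K \<subseteq> \<Union>\<G>"
  obtains G y \<epsilon> where "G \<in> \<G>" "y \<in> K" "0 < \<epsilon>" "K \<inter> ball y \<epsilon> \<subseteq> G"
proof -
  have "\<exists>G\<in>\<G>. \<not> K \<subseteq> closure (K - G)"
  proof (rule ccontr)
    assume "\<not> ?thesis"
    then have dense: "K \<subseteq> closure (K - G)" if "G \<in> \<G>" for G using that by blast
    have "K \<subseteq> closure (\<Inter>((\<lambda>G. K - G) ` \<G>))"
    proof (rule Baire[OF compact_imp_closed[OF K(1)]])
      show "countable ((\<lambda>G. K - G) ` \<G>)" using \<open>countable \<G>\<close> by simp
    next
      fix T assume "T \<in> (\<lambda>G. K - G) ` \<G>"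
      then obtain G where G: "G \<in> \<G>" "T = K - G" by blast
      obtain T' where T': "closed T'" "G = E \<inter> T'" using closed[OF G(1)] closedin_closed by blast
      have "T = K \<inter> - T'" using G(2) T'(2) K(3) by blast
      then have "openin (top_of_set K) T" using T'(1) by (auto simp: openin_open open_Compl)
      then show "openin (top_of_set K) T \<and> K \<subseteq> closure T" using dense G by simp
    qed
    moreover have "\<G> \<noteq> {}" using cover K(2) by blast
    then have "\<Inter>((\<lambda>G. K - G) ` \<G>) = {}" using cover by blast
    ultimately show False using K(2) by simp
  qed
  then obtain G y where "G \<in> \<G>" "y \<in> K" "y \<notin> closure (K - G)" by blast
  moreover obtain \<epsilon> where "\<epsilon> > 0" "ball y \<epsilon> \<subseteq> - closure (K - G)"
    using open_contains_ball[of "- closure (K - G)"] calculation(3) by blast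
  ultimately show thesis using closure_subset by (intro that) blast+
qed

lemma countable_closedin_cover_subcontinuum:
  fixes K E :: "'a::euclidean_space set"
  assumes K: "compact K" "connected K" "K \<subseteq> E" "a \<in> K" "b \<in> K" "a \<noteq> b"
    and "countable \<G>" "\<And>G. G \<in> \<G> \<Longrightarrow> closedin (top_of_set E) G" "K \<subseteq> \<Union>\<G>" and "0 < \<delta>"
  obtains G L y p where "G \<in> \<G>" "compact L" "connected L" "L \<subseteq> K \<inter> G" "y \<in> L" "p \<in> L" "y \<noteq> p"
    "L \<subseteq> cball y (dist y p)" "dist y p \<le> \<delta>"
proof -
  obtain G y \<epsilon> where "G \<in> \<G>" "y \<in> K" "0 < \<epsilon>" and K_G: "K \<inter> ball y \<epsilon> \<subseteq> G"
    using Baire_countable_closedin_cover[of K E \<G>] assms by blast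
  define \<rho> where "\<rho> = min (\<epsilon>/2) (min \<delta> (dist a b / 3))"
  have \<rho>: "0 < \<rho>" "\<rho> < \<epsilon>" "\<rho> \<le> \<delta>" "3 * \<rho> \<le> dist a b"
    using \<open>0 < \<epsilon>\<close> \<open>0 < \<delta>\<close> \<open>a \<noteq> b\<close> by (auto simp: \<rho>_def)
  have "\<not> K \<subseteq> ball y \<rho>"
  proof
    assume "K \<subseteq> ball y \<rho>"
    then have "dist y a < \<rho>" "dist y b < \<rho>" using K(4,5) by auto
    then show False using dist_triangle3[of a b y] \<rho>(1,4) by linarith
  qed
  then obtain L where L: "compact L" "connected L" "L \<subseteq> K \<inter> cball y \<rho>" "y \<in> L"
      and "L \<inter> sphere y \<rho> \<noteq> {}"
    using continuum_boundary_bumping[OF K(1,2) \<open>y \<in> K\<close> _ \<rho>(1)] by blast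
  then obtain p where "p \<in> L" "p \<in> sphere y \<rho>" by blast
  then have "p \<in> L" "dist y p = \<rho>" by simp_all
  moreover have "L \<subseteq> G" using L(3) K_G \<rho>(2) by fastforce
  ultimately show thesis using L \<rho> \<open>G \<in> \<G>\<close> by (intro that[of G L y p]) auto
qed

section \<open>Non-thin sets\<close>

(* Non-thinness of A at every point of E, in an epsilon-delta form that avoids Limsup. *)
definition nonthin_on :: "complex set \<Rightarrow> complex set \<Rightarrow> bool" where
  "nonthin_on A E \<longleftrightarrow>
    (\<forall>\<Omega> u z c \<rho>. subharmonic_on \<Omega> u \<and> z \<in> \<Omega> \<and> z \<in> E \<and> c < u z \<and> 0 < (\<rho>::real) \<longrightarrow>
      (\<exists>w\<in>A - {z}. dist w z < \<rho> \<and> c \<le> u w))"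

lemma nonthin_onD:
  "nonthin_on A E \<Longrightarrow> subharmonic_on \<Omega> u \<Longrightarrow> z \<in> \<Omega> \<Longrightarrow> z \<in> E \<Longrightarrow> c < u z \<Longrightarrow> 0 < \<rho> \<Longrightarrow>
    \<exists>w\<in>A - {z}. dist w z < \<rho> \<and> c \<le> u w"
  unfolding nonthin_on_def by blast

lemma continuum_not_in_nonseparating_Union:
  fixes E :: "complex set"
  assumes "countable \<F>"
    and closed: "\<And>F. F \<in> \<F> \<Longrightarrow> closedin (top_of_set E) F"
    and nowhere_dense: "\<And>F. F \<in> \<F> \<Longrightarrow> interior F = {}"
    and nonsep: "\<And>F V. F \<in> \<F> \<Longrightarrow> open V \<Longrightarrow> connected V \<Longrightarrow> V \<subseteq> E \<Longrightarrow> connected (V - F)"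
    and K: "compact K" "connected K" "a \<in> K" "b \<in> K" "a \<noteq> b" "K \<subseteq> cball z0 r"
    and E: "cball z0 (5 * r) \<subseteq> E"
  shows "\<not> K \<subseteq> insert z0 (\<Union>\<F>)"
proof
  assume cover: "K \<subseteq> insert z0 (\<Union>\<F>)"
  have "0 < dist a b" "dist a b \<le> dist z0 a + dist z0 b" using K(5)
    by (simp_all add: dist_triangle3)
  moreover have "dist z0 a \<le> r" "dist z0 b \<le> r" using K(3,4,6) by auto
  ultimately have "0 < r" by linarith
  then have "cball z0 r \<subseteq> cball z0 (5 * r)" by (intro subset_cball) simp
  then have "K \<subseteq> E" "z0 \<in> E" using K(6) E \<open>0 < r\<close> by auto
  then have "closedin (top_of_set E) {z0}" by (intro closed_subset) auto
  then have "closedin (top_of_set E) G" if "G \<in> insert {z0} \<F>" for G using that closed by blast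
  moreover have "countable (insert {z0} \<F>)" "K \<subseteq> \<Union>(insert {z0} \<F>)" using \<open>countable \<F>\<close> cover by auto
  ultimately obtain G L y p
    where G: "G \<in> insert {z0} \<F>" and L: "compact L" "connected L" "L \<subseteq> K \<inter> G"
      "y \<in> L" "p \<in> L" "y \<noteq> p" "L \<subseteq> cball y (dist y p)" "dist y p \<le> r"
    using countable_closedin_cover_subcontinuum[OF K(1,2) \<open>K \<subseteq> E\<close> K(3-5) _ _ _ \<open>0 < r\<close>] by blast
  have "ball y (4 * dist y p) \<subseteq> E"
  proof
    fix w assume "w \<in> ball y (4 * dist y p)"
    moreover have "dist z0 y \<le> r" using L(3,4) K(6) by auto
    ultimately have "dist z0 w \<le> 5 * r" using L(8) dist_triangle[of z0 w y] by simp
    then show "w \<in> E" using E by auto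
  qed
  show False
  proof (cases "G = {z0}")
    case True
    then show False using L(3-6) by blast
  next
    case False
    then have "G \<in> \<F>" using G by simp
    then show False
      using nonseparating_set_contains_no_continuum[OF nowhere_dense nonsep L(1,2,4-7)]
        \<open>ball y (4 * dist y p) \<subseteq> E\<close> L(3) by blast
  qed
qed

lemma nonthin_on_Diff_Union_nonseparating:
  fixes E :: "complex set"
  assumes "open E" "countable \<F>"
    and closed: "\<And>F. F \<in> \<F> \<Longrightarrow> closedin (top_of_set E) F"
    and nowhere_dense: "\<And>F. F \<in> \<F> \<Longrightarrow> interior F = {}"
    and nonsep: "\<And>F V. F \<in> \<F> \<Longrightarrow> open V \<Longrightarrow> connected V \<Longrightarrow> V \<subseteq> E \<Longrightarrow> connected (V - F)"
  shows "nonthin_on (E - \<Union>\<F>) E"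
  unfolding nonthin_on_def
proof (intro allI impI, elim conjE)
  fix \<Omega> u z0 c and \<rho> :: real
  assume sh: "subharmonic_on \<Omega> u" and z0: "z0 \<in> \<Omega>" "z0 \<in> E" and "c < u z0" "0 < \<rho>"
  show "\<exists>w\<in>(E - \<Union>\<F>) - {z0}. dist w z0 < \<rho> \<and> c \<le> u w"
  proof (rule ccontr)
    assume none: "\<not> ?thesis"
    have "open (\<Omega> \<inter> E)" using subharmonic_on_imp_open[OF sh] \<open>open E\<close> by blast
    then obtain r0 where "r0 > 0" "ball z0 r0 \<subseteq> \<Omega> \<inter> E" using z0 open_contains_ball by blast
    define r where "r = min (r0/6) (\<rho>/2)"
    have r: "0 < r" "r < \<rho>" and big_ball: "cball z0 (5 * r) \<subseteq> \<Omega> \<inter> E"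
      using \<open>r0 > 0\<close> \<open>0 < \<rho>\<close> \<open>ball z0 r0 \<subseteq> \<Omega> \<inter> E\<close> by (auto simp: r_def)
    then have "cball z0 r \<subseteq> \<Omega>" by auto
    then obtain K where K: "compact K" "connected K" "K \<subseteq> {z \<in> cball z0 r. c \<le> u z}" "z0 \<in> K"
        and "K \<inter> sphere z0 r \<noteq> {}"
      using subharmonic_superlevel_continuum[OF sh r(1) _ \<open>c < u z0\<close>] by blast
    then obtain q where "q \<in> K" "q \<in> sphere z0 r" by blast
    then have "q \<noteq> z0" using r(1) by auto
    have "K \<subseteq> insert z0 (\<Union>\<F>)"
    proof
      fix z assume "z \<in> K"
      then have "z \<in> cball z0 r" "c \<le> u z" using K(3) by auto
      moreover have "cball z0 r \<subseteq> cball z0 (5 * r)" using r(1) by (intro subset_cball) simp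
      ultimately have "z \<in> E" "dist z z0 < \<rho>" "c \<le> u z"
        using big_ball r(2) by (auto simp: dist_commute)
      then show "z \<in> insert z0 (\<Union>\<F>)" using none by blast
    qed
    moreover have "\<not> K \<subseteq> insert z0 (\<Union>\<F>)"
      using continuum_not_in_nonseparating_Union[OF \<open>countable \<F>\<close> closed nowhere_dense nonsep
          K(1,2,4) \<open>q \<in> K\<close> \<open>q \<noteq> z0\<close>[symmetric]] K(3) big_ball by blast
    ultimately show False by blast
  qed
qed

lemma nonthin_on_closure:
  assumes "nonthin_on A E" "z \<in> E"
  shows "z \<in> closure (A - {z})"
  unfolding closure_approachable
proof (intro allI impI)
  fix e :: real assume "e > 0"
  have "\<exists>w\<in>A - {z}. dist w z < e \<and> -1 \<le> ereal 0"
    by (rule nonthin_onD[OF assms(1) subharmonic_on_const[OF open_UNIV] UNIV_I assms(2) _ \<open>e > 0\<close>])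
       (simp flip: zero_ereal_def)
  then show "\<exists>w\<in>A - {z}. dist w z < e" by blast
qed

lemma nonthin_on_imp_not_thin_at:
  assumes "nonthin_on A E" "z \<in> E"
  shows "\<not> thin_at A z"
proof
  assume "thin_at A z"
  then obtain \<Omega> u where sh: "subharmonic_on \<Omega> u" "z \<in> \<Omega>"
      and "Limsup (at z within (A - {z})) u < u z"
    using nonthin_on_closure[OF assms] unfolding thin_at_def by blast
  then obtain c where c: "Limsup (at z within (A - {z})) u < c" "c < u z" using dense by blast
  have "eventually (\<lambda>w. u w < c) (at z within (A - {z}))" using c(1) by (rule Limsup_lessD)
  then obtain d where "d > 0" and less: "\<And>w. w \<in> A - {z} \<Longrightarrow> w \<noteq> z \<Longrightarrow> dist w z < d \<Longrightarrow> u w < c"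
    unfolding eventually_at by blast
  obtain w where w: "w \<in> A - {z}" "dist w z < d" "c \<le> u w"
    using nonthin_onD[OF assms(1) sh assms(2) c(2) \<open>d > 0\<close>] by blast
  have "u w < c" using less w(1,2) by blast
  then show False using w(3) by simp
qed

lemma nonthin_on_subharmonic_le_0:
  assumes "nonthin_on A E" "subharmonic_on \<Omega> u" "z \<in> \<Omega>" "z \<in> E"
    and le_0: "\<And>w. w \<in> A \<inter> \<Omega> \<Longrightarrow> u w \<le> 0"
  shows "u z \<le> 0"
proof (rule ccontr)
  assume "\<not> u z \<le> 0"
  then have "0 < u z" by simp
  then obtain c where c: "0 < c" "c < u z" using dense by blast
  obtain \<rho> where \<rho>: "\<rho> > 0" "ball z \<rho> \<subseteq> \<Omega>"
    using subharmonic_on_imp_open[OF assms(2)] assms(3) open_contains_ball by blast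
  obtain w where w: "w \<in> A" "dist w z < \<rho>" "c \<le> u w"
    using nonthin_onD[OF assms(1-4) c(2) \<rho>(1)] by blast
  then have "w \<in> \<Omega>" using \<rho>(2) by (auto simp: dist_commute)
  then have "u w \<le> 0" using le_0 w(1) by blast
  then show False using c(1) w(3) by simp
qed

lemma nonthin_on_rel_extremal_eq_0:
  assumes "nonthin_on A E" "open \<Omega>" "z \<in> \<Omega>" "z \<in> E"
  shows "rel_extremal (A \<inter> \<Omega>) \<Omega> z = 0"
proof -
  define V where "V = {u z | u. subharmonic_on \<Omega> u \<and> (\<forall>w\<in>\<Omega>. u w \<le> 1) \<and> (\<forall>w\<in>A \<inter> \<Omega>. u w \<le> 0)}"
  have "Sup V \<le> 0"
  proof (rule Sup_least)
    fix x assume "x \<in> V"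
    then obtain u where "x = u z" "subharmonic_on \<Omega> u" "\<forall>w\<in>A \<inter> \<Omega>. u w \<le> 0" by (auto simp: V_def)
    then show "x \<le> 0" using nonthin_on_subharmonic_le_0[OF assms(1) _ assms(3,4)] by blast
  qed
  moreover have "ereal 0 \<in> V" unfolding V_def
    by (rule CollectI, rule exI[of _ "\<lambda>_. ereal 0"]) (simp add: subharmonic_on_const[OF assms(2)])
  then have "0 \<le> Sup V" by (simp add: Sup_upper flip: zero_ereal_def)
  ultimately show ?thesis by (simp add: rel_extremal_def V_def)
qed

lemma nonthin_on_rel_extremal_star_eq_0:
  assumes "nonthin_on A E" "open E" "open \<Omega>" "z \<in> \<Omega>" "z \<in> E"
  shows "rel_extremal_star (A \<inter> \<Omega>) \<Omega> z = 0"
proof -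
  have "eventually (\<lambda>w. rel_extremal (A \<inter> \<Omega>) \<Omega> w \<le> 0) (at z within \<Omega>)"
    unfolding eventually_at_topological
    using assms(2,5) nonthin_on_rel_extremal_eq_0[OF assms(1,3)] by (intro exI[of _ E]) auto
  then have "Limsup (at z within \<Omega>) (rel_extremal (A \<inter> \<Omega>) \<Omega>) \<le> 0" by (rule Limsup_bounded)
  then show ?thesis using nonthin_on_rel_extremal_eq_0[OF assms(1,3-5)]
    by (simp add: rel_extremal_star_def usc_reg_def max_def)
qed

lemma nonthin_on_imp_locally_regular:
  assumes "nonthin_on A E" "open E" "A \<subseteq> E"
  shows "locally_regular A"
  unfolding locally_regular_def using nonthin_on_rel_extremal_star_eq_0[OF assms(1,2)] assms(3)
    by blast

lemma nonthin_on_regularity: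
  assumes "nonthin_on A E" "open E" "A \<subseteq> E"
  shows "(\<forall>z\<in>E. \<not> thin_at A z) \<and> E \<subseteq> closure A \<and> locally_regular A
    \<and> (\<forall>z\<in>E. rel_extremal_star A E z = 0)"
proof (intro conjI ballI subsetI)
  show "\<not> thin_at A z" if "z \<in> E" for z
    using nonthin_on_imp_not_thin_at[OF assms(1) that] .
  show "z \<in> closure A" if "z \<in> E" for z
    using nonthin_on_closure[OF assms(1) that] closure_mono[of "A - {z}" A] by blast
  show "locally_regular A" using nonthin_on_imp_locally_regular[OF assms] .
  show "rel_extremal_star A E z = 0" if "z \<in> E" for z
    using nonthin_on_rel_extremal_star_eq_0[OF assms(1,2,2) that that] assms(3)
    by (simp add: Int_absorb2)
qed

section \<open>Fibres of a nowhere dense set\<close>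

definition fibres_containing :: "('a \<times> 'b) set \<Rightarrow> 'a set \<Rightarrow> 'b set \<Rightarrow> 'a set" where
  "fibres_containing S E D = {z \<in> E. D \<subseteq> {w. (z, w) \<in> S}}"

lemma closedin_fibres_containing:
  fixes S :: "('a::topological_space \<times> 'b::t2_space) set"
  assumes "closedin (top_of_set (E \<times> E')) S"
  shows "closedin (top_of_set E) (fibres_containing S E D)"
proof -
  obtain T where T: "closed T" "S = (E \<times> E') \<inter> T" using assms closedin_closed by blast
  have "closed {z. w \<in> E' \<and> (z, w) \<in> T}" for w
  proof (cases "w \<in> E'")
    case True
    have "closed ((\<lambda>z. (z, w)) -` T)" using T(1)
      by (intro continuous_closed_vimage continuous_intros)
    then show ?thesis using True by (simp add: vimage_def)
  qed simp
  then have "closed (\<Inter>w\<in>D. {z. w \<in> E' \<and> (z, w) \<in> T})" by blast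
  moreover have "fibres_containing S E D = E \<inter> (\<Inter>w\<in>D. {z. w \<in> E' \<and> (z, w) \<in> T})"
    using T(2) by (auto simp: fibres_containing_def)
  ultimately show ?thesis using closedin_closed by blast
qed

lemma interior_fibres_containing:
  assumes "interior S = {}" "open D" "D \<noteq> {}"
  shows "interior (fibres_containing S E D) = {}"
proof -
  have "interior (fibres_containing S E D) \<times> D \<subseteq> S"
    using interior_subset by (fastforce simp: fibres_containing_def)
  then have "interior (fibres_containing S E D) \<times> D \<subseteq> interior S"
    using assms(2) by (intro interior_maximal open_Times open_interior)
  then show ?thesis using assms(1,3) by blast
qed

lemma connected_Diff_fibres_containing:
  fixes S :: "('a::topological_space \<times> 'b::real_normed_vector) set"
  assumes S_sub: "S \<subseteq> E \<times> E'" and S_int: "interior S = {}"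
    and S_conn: "\<And>U. U \<subseteq> E \<times> E' \<Longrightarrow> open U \<Longrightarrow> connected U \<Longrightarrow> U \<noteq> {} \<Longrightarrow> connected (U - S)"
    and D: "open D" "D \<noteq> {}" and V: "open V" "connected V" "V \<subseteq> E"
  shows "connected (V - fibres_containing S E D)"
proof (cases "fibres_containing S E D = {} \<or> V = {}")
  case True
  then show ?thesis using V(2) by auto
next
  case False
  then obtain z where "D \<subseteq> {w. (z, w) \<in> S}" by (auto simp: fibres_containing_def)
  then have "D \<subseteq> E'" using S_sub by blast
  obtain w0 \<eta> where "\<eta> > 0" "ball w0 \<eta> \<subseteq> D" using D open_contains_ball by blast
  define U where "U = V \<times> ball w0 \<eta>"
  have "connected (U - S)"
    using False \<open>\<eta> > 0\<close> V \<open>ball w0 \<eta> \<subseteq> D\<close> \<open>D \<subseteq> E'\<close>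
    by (intro S_conn) (auto simp: U_def open_Times connected_Times)
  then have "connected (fst ` (U - S))" by (intro connected_continuous_image continuous_intros)
  moreover have "fst ` (U - S) \<subseteq> V - fibres_containing S E D"
    using \<open>ball w0 \<eta> \<subseteq> D\<close> by (force simp: U_def fibres_containing_def)
  moreover have "V \<subseteq> closure (fst ` (U - S))"
  proof
    fix z assume "z \<in> V"
    show "z \<in> closure (fst ` (U - S))"
      unfolding closure_iff_nhds_not_empty
    proof (intro allI impI)
      fix N N' assume "N' \<subseteq> N" "open N'" "z \<in> N'"
      have "open ((N' \<inter> V) \<times> ball w0 \<eta>)" using \<open>open N'\<close> V(1)
        by (intro open_Times open_Int open_ball)
      moreover have "(z, w0) \<in> (N' \<inter> V) \<times> ball w0 \<eta>" using \<open>z \<in> N'\<close> \<open>z \<in> V\<close> \<open>\<eta> > 0\<close> by simp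
      ultimately have "\<not> (N' \<inter> V) \<times> ball w0 \<eta> \<subseteq> S" using S_int interior_maximal by blast
      then obtain p where "p \<in> (N' \<inter> V) \<times> ball w0 \<eta>" "p \<notin> S" by blast
      then have "fst p \<in> fst ` (U - S) \<inter> N" using \<open>N' \<subseteq> N\<close> by (auto simp: U_def)
      then show "fst ` (U - S) \<inter> N \<noteq> {}" by blast
    qed
  qed
  ultimately show ?thesis by (blast intro: connected_intermediate_closure)
qed

lemma fibre_interior_empty_eq_Diff_Union:
  assumes "countable \<B>" "\<And>D. D \<in> \<B> \<Longrightarrow> open D" "\<And>U. open U \<Longrightarrow> \<exists>\<C>\<subseteq>\<B>. U = \<Union>\<C>"
  shows "{a \<in> E. interior {w. (a, w) \<in> S} = {}} = E - \<Union>(fibres_containing S E ` (\<B> - {{}}))"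
proof (intro set_eqI iffI)
  fix a assume a: "a \<in> {a \<in> E. interior {w. (a, w) \<in> S} = {}}"
  have "D \<subseteq> {w. (a, w) \<in> S} \<Longrightarrow> D \<in> \<B> \<Longrightarrow> D = {}" for D
    using a assms(2) interior_maximal by blast
  then show "a \<in> E - \<Union>(fibres_containing S E ` (\<B> - {{}}))"
    using a by (auto simp: fibres_containing_def)
next
  fix a assume a: "a \<in> E - \<Union>(fibres_containing S E ` (\<B> - {{}}))"
  obtain \<C> where "\<C> \<subseteq> \<B>" and int_eq: "interior {w. (a, w) \<in> S} = \<Union>\<C>"
    using assms(3)[OF open_interior] by blast
  have "D = {}" if "D \<in> \<C>" for D
  proof -
    have "D \<subseteq> {w. (a, w) \<in> S}" using that int_eq interior_subset by blast
    then have "a \<in> fibres_containing S E D" using a by (simp add: fibres_containing_def)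
    then show "D = {}" using a that \<open>\<C> \<subseteq> \<B>\<close> by blast
  qed
  then show "a \<in> {a \<in> E. interior {w. (a, w) \<in> S} = {}}" using a int_eq by auto
qed

lemma nonthin_on_fibre_interior_empty:
  fixes S :: "(complex \<times> complex) set"
  assumes "open E" and S_sub: "S \<subseteq> E \<times> E" and S_closed: "closedin (top_of_set (E \<times> E)) S"
    and S_int: "interior S = {}"
    and S_conn: "\<And>U. U \<subseteq> E \<times> E \<Longrightarrow> open U \<Longrightarrow> connected U \<Longrightarrow> U \<noteq> {} \<Longrightarrow> connected (U - S)"
  shows "nonthin_on {a \<in> E. interior {w. (a, w) \<in> S} = {}} E"
proof -
  obtain \<B> :: "complex set set" where \<B>: "countable \<B>" "\<And>D. D \<in> \<B> \<Longrightarrow> open D"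
      "\<And>U. open U \<Longrightarrow> \<exists>\<C>\<subseteq>\<B>. U = \<Union>\<C>"
    using univ_second_countable by metis
  have "nonthin_on (E - \<Union>(fibres_containing S E ` (\<B> - {{}}))) E"
  proof (rule nonthin_on_Diff_Union_nonseparating[OF \<open>open E\<close>])
    show "countable (fibres_containing S E ` (\<B> - {{}}))" using \<B>(1) by simp
    fix F assume "F \<in> fibres_containing S E ` (\<B> - {{}})"
    then obtain D where D: "open D" "D \<noteq> {}" and F: "F = fibres_containing S E D" using \<B>(2)
      by blast
    show "closedin (top_of_set E) F" unfolding F by (rule closedin_fibres_containing[OF S_closed])
    show "interior F = {}" unfolding F by (rule interior_fibres_containing[OF S_int D])
    show "connected (V - F)" if "open V" "connected V" "V \<subseteq> E" for V
      unfolding F by (rule connected_Diff_fibres_containing[OF S_sub S_int S_conn D that])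
  qed
  moreover have "{a \<in> E. interior {w. (a, w) \<in> S} = {}} = E - \<Union>(fibres_containing S E ` (\<B> - {{}}))"
    by (rule fibre_interior_empty_eq_Diff_Union[OF \<B>])
  ultimately show ?thesis by (simp only:)
qed

lemma prod_swap_image_eq_vimage: "prod.swap ` X = prod.swap -` X"
proof
  show "prod.swap -` X \<subseteq> prod.swap ` X"
  proof
    fix p assume "p \<in> prod.swap -` X"
    then show "p \<in> prod.swap ` X" by (intro image_eqI[of _ _ "prod.swap p"]) auto
  qed
qed auto

lemma swap_nonseparating_nowhere_dense:
  fixes S :: "('a::topological_space \<times> 'a) set"
  assumes S_sub: "S \<subseteq> E \<times> E" and S_closed: "closedin (top_of_set (E \<times> E)) S"
    and S_int: "interior S = {}"
    and S_conn: "\<And>U. U \<subseteq> E \<times> E \<Longrightarrow> open U \<Longrightarrow> connected U \<Longrightarrow> U \<noteq> {} \<Longrightarrow> connected (U - S)"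
  shows "prod.swap ` S \<subseteq> E \<times> E" "closedin (top_of_set (E \<times> E)) (prod.swap ` S)"
    "interior (prod.swap ` S) = {}"
    "\<And>U. U \<subseteq> E \<times> E \<Longrightarrow> open U \<Longrightarrow> connected U \<Longrightarrow> U \<noteq> {} \<Longrightarrow> connected (U - prod.swap ` S)"
proof -
  have open_swap: "open (prod.swap ` X)" if "open X" for X :: "('a \<times> 'a) set"
    unfolding prod_swap_image_eq_vimage using that
      by (intro continuous_open_vimage continuous_intros)
  show "prod.swap ` S \<subseteq> E \<times> E" using S_sub by auto
  obtain T where "closed T" "S = (E \<times> E) \<inter> T" using S_closed closedin_closed by blast
  moreover have "closed (prod.swap ` T)"
    unfolding prod_swap_image_eq_vimage using \<open>closed T\<close>
      by (intro continuous_closed_vimage continuous_intros)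
  ultimately show "closedin (top_of_set (E \<times> E)) (prod.swap ` S)"
    by (auto simp: closedin_closed image_Int product_swap intro!: exI[of _ "prod.swap ` T"])
  have "prod.swap ` interior (prod.swap ` S) \<subseteq> S" using interior_subset by fastforce
  then have "prod.swap ` interior (prod.swap ` S) \<subseteq> interior S"
    using open_swap[OF open_interior] by (rule interior_maximal)
  then show "interior (prod.swap ` S) = {}" using S_int by blast
  fix U assume U: "U \<subseteq> E \<times> E" "open U" "connected U" "U \<noteq> {}"
  have "connected (prod.swap ` U - S)"
    using U open_swap by (intro S_conn) (auto intro: connected_continuous_image continuous_intros)
  then have "connected (prod.swap ` (prod.swap ` U - S))"
    by (intro connected_continuous_image continuous_intros)
  moreover have "prod.swap ` (prod.swap ` U - S) = U - prod.swap ` S"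
    by (simp add: image_set_diff image_image)
  ultimately show "connected (U - prod.swap ` S)" by simp
qed

theorem mainTheorem4:
  fixes S :: "(complex \<times> complex) set"
  defines "E \<equiv> ball (0::complex) 1"
  assumes S_sub: "S \<subseteq> E \<times> E"
    and S_closed: "closedin (top_of_set (E \<times> E)) S"
    and S_int: "interior S = {}"
    and S_conn: "\<And>U. U \<subseteq> E \<times> E \<Longrightarrow> open U \<Longrightarrow> connected U \<Longrightarrow> U \<noteq> {} \<Longrightarrow> connected (U - S)"
  defines "A \<equiv> {a \<in> E. interior {w. (a, w) \<in> S} = {}}"
    and "B \<equiv> {b \<in> E. interior {z. (z, b) \<in> S} = {}}"
  shows "(\<forall>z\<in>E. \<not> thin_at A z) \<and> (\<forall>z\<in>E. \<not> thin_at B z)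
         \<and> E \<subseteq> closure A \<and> E \<subseteq> closure B
         \<and> locally_regular A \<and> locally_regular B
         \<and> (\<forall>z\<in>E. rel_extremal_star A E z = 0) \<and> (\<forall>z\<in>E. rel_extremal_star B E z = 0)"
proof -
  have "open E" by (simp add: E_def)
  have A: "nonthin_on A E"
    unfolding A_def
    by (rule nonthin_on_fibre_interior_empty[OF \<open>open E\<close> S_sub S_closed S_int S_conn])
  have "nonthin_on {a \<in> E. interior {w. (a, w) \<in> prod.swap ` S} = {}} E"
    by (rule nonthin_on_fibre_interior_empty[OF \<open>open E\<close>
          swap_nonseparating_nowhere_dense[OF S_sub S_closed S_int S_conn]])
  then have B: "nonthin_on B E" by (simp add: B_def)
  have "A \<subseteq> E" "B \<subseteq> E" by (auto simp: A_def B_def)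
  then show ?thesis
    using nonthin_on_regularity[OF A \<open>open E\<close>] nonthin_on_regularity[OF B \<open>open E\<close>] by blast
qed

end
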